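(* Let $n$ be a positive integer and let $\mathcal F$ be an $\mathcal N$-saturated family of subsets of $[n]$. Let $A'\subseteq[n]$ with $A'\notin\mathcal F$, and suppose there exists $A\in\mathcal F$ with $A'\subset A$, and that $A'$ is a maximal element of some induced copy of $\mathcal N$ in $\mathcal F\cup\{A'\}$. Then there exists an induced copy of $\mathcal N$ in $\mathcal F\cup\{A'\}$ in which $A'$ is a maximal element and the other maximal element is a subset of $A$.
   Context: The poset $\mathcal N$ has four elements $a,b,c,d$ with $a<c$, $b<c$, $b<d$ and no other comparabilities (so $a,b$ are its minimal elements and $c,d$ its maximal elements). A family $\mathcal Q$ of sets (ordered by inclusion) contains an induced copy of $\mathcal N$ if there are distinct sets in $\mathcal Q$ whose inclusion relations are exactly those of $a,b,c,d$ above. A family $\mathcal F$ of subsets of $[n]=\{1,\dots,n\}$ is $\mathcal N$-saturated if $\mathcal F$ contains no induced copy of $\mathcal N$, but for every $S\subseteq[n]$ with $S\notin\mathcal F$, the family $\mathcal F\cup\{S\}$ contains an induced copy of $\mathcal N$. *)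

theory Defs
  imports Main
begin

definition induced_N :: "'a set set \<Rightarrow> 'a set \<Rightarrow> 'a set \<Rightarrow> 'a set \<Rightarrow> 'a set \<Rightarrow> bool" where
  "induced_N Q a b c d \<longleftrightarrow>
     a \<in> Q \<and> b \<in> Q \<and> c \<in> Q \<and> d \<in> Q \<and>
     distinct [a, b, c, d] \<and>
     a \<subset> c \<and> b \<subset> c \<and> b \<subset> d \<and>
     \<not> a \<subseteq> b \<and> \<not> b \<subseteq> a \<and>
     \<not> a \<subseteq> d \<and> \<not> d \<subseteq> a \<and>
     \<not> c \<subseteq> d \<and> \<not> d \<subseteq> c \<and>
     \<not> c \<subseteq> a \<and> \<not> c \<subseteq> b \<and> \<not> d \<subseteq> b"

definition contains_induced_N :: "'a set set \<Rightarrow> bool" where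
  "contains_induced_N Q \<longleftrightarrow> (\<exists>a b c d. induced_N Q a b c d)"

definition N_saturated :: "nat \<Rightarrow> nat set set \<Rightarrow> bool" where
  "N_saturated n F \<longleftrightarrow>
     F \<subseteq> Pow {1..n} \<and> \<not> contains_induced_N F \<and>
     (\<forall>S. S \<subseteq> {1..n} \<and> S \<notin> F \<longrightarrow> contains_induced_N (insert S F))"

end

theory Submission
  imports Defs
begin

text \<open>If \<open>A'\<close> plays the role \<open>c\<close>, replacing it by \<open>A\<close> would give a copy of N inside \<open>F\<close>
  unless \<open>d \<subseteq> A\<close>. If \<open>A'\<close> plays the role \<open>d\<close> and \<open>c \<subseteq> A\<close> fails, replacing \<open>A'\<close> by \<open>A\<close>
  shows \<open>a \<subseteq> A\<close>, and a member \<open>X\<close> of \<open>F\<close> with \<open>a \<union> b \<subseteq> X \<subseteq> c \<inter> A\<close> can then replace \<open>c\<close>.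
  Such an \<open>X\<close> exists because in an N-saturated family every intersection \<open>T\<close> of members has
  a greatest member of \<open>F\<close> below it. If \<open>T \<notin> F\<close>, then \<open>T\<close> lies in a copy of N in \<open>F \<union> {T}\<close>.
  It cannot be maximal there, since every member of the intersection could replace it.
  If it is minimal, some other element \<open>S \<in> F\<close> of the copy (\<open>d\<close> for \<open>a\<close>, \<open>a\<close> for \<open>b\<close>)
  contains every member of \<open>F\<close> below \<open>T\<close>, since such a member could otherwise replace \<open>T\<close>;
  so \<open>T \<inter> S\<close> is a strictly smaller intersection with the same members of \<open>F\<close> below it.\<close>

lemma induced_N_shrink_a:
  assumes "induced_N Q a b c d" "a' \<in> Q" "a' \<subseteq> a" "\<not> a' \<subseteq> d"
  shows "induced_N Q a' b c d"
  using assms unfolding induced_N_def by auto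

lemma induced_N_shrink_b:
  assumes "induced_N Q a b c d" "b' \<in> Q" "b' \<subseteq> b" "\<not> b' \<subseteq> a"
  shows "induced_N Q a b' c d"
  using assms unfolding induced_N_def by auto

lemma induced_N_replace_c:
  assumes "induced_N Q a b c d" "c' \<in> Q" "a \<subseteq> c'" "b \<subseteq> c'" "\<not> d \<subseteq> c'"
  shows "induced_N Q a b c' d"
  using assms unfolding induced_N_def by auto

lemma induced_N_grow_d:
  assumes "induced_N Q a b c d" "d' \<in> Q" "d \<subseteq> d'" "\<not> a \<subseteq> d'"
  shows "induced_N Q a b c d'"
  using assms unfolding induced_N_def by auto

lemma induced_N_insert_contains_new:
  assumes "\<not> contains_induced_N F" "induced_N (insert T F) a b c d"
  shows "T \<in> {a, b, c, d}"
  using assms unfolding contains_induced_N_def induced_N_def by blast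

lemma N_saturated_not_contains_induced_N:
  "N_saturated n F \<Longrightarrow> \<not> contains_induced_N F"
  unfolding N_saturated_def by blast

lemma N_saturated_insert_induced_N:
  assumes "N_saturated n F" "T \<subseteq> {1..n}" "T \<notin> F"
  obtains a b c d where "induced_N (insert T F) a b c d" "T \<in> {a, b, c, d}"
  using assms induced_N_insert_contains_new unfolding N_saturated_def contains_induced_N_def
  by metis

lemma induced_N_relations:
  assumes "induced_N Q a b c d"
  shows "{a, b, c, d} \<subseteq> Q" "a \<subset> c" "b \<subset> c" "b \<subset> d"
    "\<not> a \<subseteq> b" "\<not> b \<subseteq> a" "\<not> a \<subseteq> d" "\<not> d \<subseteq> a" "\<not> c \<subseteq> d" "\<not> d \<subseteq> c"
  using assms unfolding induced_N_def by auto

lemma induced_N_new_minimal_cover: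
  assumes F: "\<not> contains_induced_N F" and "T \<notin> F"
    and N: "induced_N (insert T F) a b c d" and "T = a \<or> T = b"
  obtains S where "S \<in> F" "\<not> T \<subseteq> S" "\<And>Y. Y \<in> F \<Longrightarrow> Y \<subseteq> T \<Longrightarrow> Y \<subseteq> S"
proof -
  note R = induced_N_relations[OF N]
  note new = induced_N_insert_contains_new[OF F]
  from \<open>T = a \<or> T = b\<close> show thesis
  proof
    assume a: "T = a"
    have "Y \<subseteq> d" if "Y \<in> F" "Y \<subseteq> T" for Y
    proof (rule ccontr)
      assume "\<not> Y \<subseteq> d"
      then have "T \<in> {Y, b, c, d}" using new[OF induced_N_shrink_a[OF N]] that a by blast
      then show False using R a \<open>T \<notin> F\<close> that(1) by blast
    qed
    moreover have "d \<in> F" using R a by blast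
    ultimately show thesis using that R(7) a by blast
  next
    assume b: "T = b"
    have "Y \<subseteq> a" if "Y \<in> F" "Y \<subseteq> T" for Y
    proof (rule ccontr)
      assume "\<not> Y \<subseteq> a"
      then have "T \<in> {a, Y, c, d}" using new[OF induced_N_shrink_b[OF N]] that b by blast
      then show False using R b \<open>T \<notin> F\<close> that(1) by blast
    qed
    moreover have "a \<in> F" using R b by blast
    ultimately show thesis using that R(6) b by blast
  qed
qed

lemma induced_N_new_Inter_not_maximal:
  assumes F: "\<not> contains_induced_N F" and "G \<subseteq> F" "\<Inter>G \<notin> F"
    and N: "induced_N (insert (\<Inter>G) F) a b c d"
  shows "\<Inter>G \<noteq> c" "\<Inter>G \<noteq> d"
proof -
  note R = induced_N_relations[OF N]
  note new = induced_N_insert_contains_new[OF F]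
  have in_F: "Y \<in> insert (\<Inter>G) F" "Y \<noteq> \<Inter>G" if "Y \<in> G" for Y
    using that assms(2,3) by auto
  show "\<Inter>G \<noteq> c"
  proof
    assume c: "\<Inter>G = c"
    have "d \<subseteq> Y" if "Y \<in> G" for Y
    proof (rule ccontr)
      assume "\<not> d \<subseteq> Y"
      moreover have "a \<subseteq> Y" "b \<subseteq> Y" using R(2,3) c that by auto
      ultimately have "\<Inter>G \<in> {a, b, Y, d}"
        using new[OF induced_N_replace_c[OF N in_F(1)[OF that]]] by blast
      then show False using R(2,3,9) c in_F(2)[OF that] by blast
    qed
    then have "d \<subseteq> c" using c by blast
    then show False using R(10) by blast
  qed
  show "\<Inter>G \<noteq> d"
  proof
    assume d: "\<Inter>G = d"
    have "a \<subseteq> Y" if "Y \<in> G" for Y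
    proof (rule ccontr)
      assume "\<not> a \<subseteq> Y"
      moreover have "d \<subseteq> Y" using d that by blast
      ultimately have "\<Inter>G \<in> {a, b, c, Y}"
        using new[OF induced_N_grow_d[OF N in_F(1)[OF that]]] by blast
      then show False using R(4,7,9) d in_F(2)[OF that] by blast
    qed
    then have "a \<subseteq> d" using d by blast
    then show False using R(7) by blast
  qed
qed

lemma N_saturated_greatest_below_Inter:
  assumes sat: "N_saturated n F" and "G \<subseteq> F" "G \<noteq> {}"
  shows "\<exists>X\<in>F. X \<subseteq> \<Inter>G \<and> (\<forall>Y\<in>F. Y \<subseteq> \<Inter>G \<longrightarrow> Y \<subseteq> X)"
  using assms(2,3)
proof (induction "card (\<Inter>G)" arbitrary: G rule: less_induct)
  case less
  define T where "T = \<Inter>G"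
  show ?case
  proof (cases "T \<in> F")
    case True
    then show ?thesis unfolding T_def by blast
  next
    case False
    have T_sub: "T \<subseteq> {1..n}"
      using less.prems sat unfolding N_saturated_def T_def by blast
    have F_free: "\<not> contains_induced_N F"
      using sat by (rule N_saturated_not_contains_induced_N)
    obtain p q r s where N: "induced_N (insert T F) p q r s" and "T \<in> {p, q, r, s}"
      using N_saturated_insert_induced_N[OF sat T_sub False] .
    moreover have "T \<noteq> r" "T \<noteq> s"
      using induced_N_new_Inter_not_maximal[OF F_free less.prems(1) False[unfolded T_def]
          N[unfolded T_def], folded T_def] .
    ultimately have "T = p \<or> T = q" by blast
    then obtain S where S: "S \<in> F" "\<not> T \<subseteq> S"
      and below_T: "\<And>Y. Y \<in> F \<Longrightarrow> Y \<subseteq> T \<Longrightarrow> Y \<subseteq> S"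
      using induced_N_new_minimal_cover[OF F_free False N] by blast
    have Inter_eq: "\<Inter>(insert S G) = T \<inter> S" unfolding T_def by blast
    have "card (T \<inter> S) < card T"
      using S(2) finite_subset[OF T_sub] by (intro psubset_card_mono) auto
    then have "\<exists>X\<in>F. X \<subseteq> T \<inter> S \<and> (\<forall>Y\<in>F. Y \<subseteq> T \<inter> S \<longrightarrow> Y \<subseteq> X)"
      using less.prems S(1)
      by (intro less.hyps[of "insert S G", unfolded Inter_eq, folded T_def]) auto
    then obtain X where X: "X \<in> F" "X \<subseteq> T \<inter> S" "\<forall>Y\<in>F. Y \<subseteq> T \<inter> S \<longrightarrow> Y \<subseteq> X"
      by blast
    have "\<forall>Y\<in>F. Y \<subseteq> T \<longrightarrow> Y \<subseteq> X" using X(3) below_T by (meson Int_greatest)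
    then show ?thesis using X(1,2) unfolding T_def[symmetric] by blast
  qed
qed

lemma induced_N_new_c_superset_contains_d:
  assumes F: "\<not> contains_induced_N F"
    and N: "induced_N (insert A' F) a b A' d" and "A \<in> F" "A' \<subset> A"
  shows "d \<subseteq> A"
proof (rule ccontr)
  note R = induced_N_relations[OF N]
  assume "\<not> d \<subseteq> A"
  moreover have "a \<subseteq> A" "b \<subseteq> A" using R(2,3) \<open>A' \<subset> A\<close> by auto
  ultimately have "A' \<in> {a, b, A, d}"
    using induced_N_insert_contains_new[OF F induced_N_replace_c[OF N]] \<open>A \<in> F\<close> by blast
  then show False using R(2,3,9) \<open>A' \<subset> A\<close> by blast
qed

lemma induced_N_new_d_replace_c_below:
  assumes sat: "N_saturated n F"
    and N: "induced_N (insert A' F) a b c A'" and "A \<in> F" "A' \<subset> A"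
  obtains X where "induced_N (insert A' F) a b X A'" "X \<subseteq> A"
proof (cases "c \<subseteq> A")
  case True
  then show thesis using that N by blast
next
  case False
  note R = induced_N_relations[OF N]
  have "a \<subseteq> A"
  proof (rule ccontr)
    assume "\<not> a \<subseteq> A"
    then have "A' \<in> {a, b, c, A}"
      using induced_N_insert_contains_new[OF N_saturated_not_contains_induced_N[OF sat]
          induced_N_grow_d[OF N]] \<open>A \<in> F\<close> \<open>A' \<subset> A\<close> by blast
    then show False using R(4,8,9) \<open>A' \<subset> A\<close> by blast
  qed
  moreover have "b \<subseteq> A" using R(4) \<open>A' \<subset> A\<close> by auto
  moreover have "a \<in> F" "b \<in> F" "c \<in> F" using R(1,4,8,9) by auto
  moreover obtain X where X: "X \<in> F" "X \<subseteq> c \<inter> A"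
    and "\<forall>Y\<in>F. Y \<subseteq> c \<inter> A \<longrightarrow> Y \<subseteq> X"
    using N_saturated_greatest_below_Inter[OF sat, of "{c, A}"] \<open>c \<in> F\<close> \<open>A \<in> F\<close> by auto
  ultimately have "a \<subseteq> X" "b \<subseteq> X" using R(2,3) by (meson Int_greatest less_imp_le)+
  moreover have "\<not> A' \<subseteq> X" using X(2) R(10) by blast
  ultimately have "induced_N (insert A' F) a b X A'"
    using induced_N_replace_c[OF N, of X] X(1) by blast
  then show thesis using that X(2) by blast
qed

theorem lemma3p1:
  fixes n :: nat and F :: "nat set set" and A A' :: "nat set"
  assumes "n \<ge> 1"
    and "N_saturated n F"
    and "A' \<subseteq> {1..n}" and "A' \<notin> F"
    and "A \<in> F" and "A' \<subset> A"
    and "\<exists>a b c d. induced_N (insert A' F) a b c d \<and> (A' = c \<or> A' = d)"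
  shows "\<exists>a b c d. induced_N (insert A' F) a b c d \<and>
           ((A' = c \<and> d \<subseteq> A) \<or> (A' = d \<and> c \<subseteq> A))"
proof -
  obtain a b c d where N: "induced_N (insert A' F) a b c d" and "A' = c \<or> A' = d"
    using assms(7) by blast
  then consider "induced_N (insert A' F) a b A' d" | "induced_N (insert A' F) a b c A'"
    by blast
  then show ?thesis
  proof cases
    case 1
    then show ?thesis
      using induced_N_new_c_superset_contains_d[OF N_saturated_not_contains_induced_N[OF assms(2)]]
        assms(5,6) by blast
  next
    case 2
    then show ?thesis using induced_N_new_d_replace_c_below[OF assms(2)] assms(5,6) by metis
  qed
qed

end
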